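(* Let $T$ be a rank-one transformation given by a cutting and stacking construction and let $I$ be the level of $C_0$. Then for all sets $A,B\subseteq I$ which are finite unions of levels (of columns $C_j$), $$\frac{1}{a_n(I)}\sum_{k=0}^{n-1}\mu(A\cap T^kB)\longrightarrow \mu(A)\mu(B)\quad (n\to\infty).$$
   Context: $(X,\mathcal B,\mu)$ is a standard Borel space with a nonatomic $\sigma$-finite measure. A rank-one transformation given by cutting and stacking: $C_0$ consists of a single level $I$ of positive finite measure; column $C_n$ has height $h_n$, levels of measure $w_n$; it is cut into $r_n\ge 2$ subcolumns of equal width, $s_{n,k}\ge 0$ spacers are placed above the $k$-th subcolumn, and the subcolumns are stacked left to right to form $C_{n+1}$; $T$ maps each level to the one directly above it. For a set $F$ of positive finite measure, $u_k(F)=\mu(F\cap T^kF)/\mu(F)^2$ and $a_n(F)=\sum_{k=0}^{n-1}u_k(F)$. *)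

theory Defs
  imports "HOL-Analysis.Analysis"
begin

text \<open>Standard Borel space: measurably isomorphic to a Borel subset of the reals
  (Kuratowski: every standard Borel space is).\<close>
definition standard_borel :: "'a measure \<Rightarrow> bool" where
  "standard_borel M \<longleftrightarrow>
     (\<exists>S f g. S \<in> sets (borel :: real measure) \<and>
        f \<in> measurable M (restrict_space borel S) \<and>
        g \<in> measurable (restrict_space borel S) M \<and>
        (\<forall>x\<in>space M. g (f x) = x) \<and> (\<forall>y\<in>S. f (g y) = y))"

definition nonatomic_measure :: "'a measure \<Rightarrow> bool" where
  "nonatomic_measure M \<longleftrightarrow>
     (\<forall>A\<in>sets M. emeasure M A > 0 \<longrightarrow>
        (\<exists>B\<in>sets M. B \<subseteq> A \<and> 0 < emeasure M B \<and> emeasure M B < emeasure M A))"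

fun col_height :: "(nat \<Rightarrow> nat) \<Rightarrow> (nat \<Rightarrow> nat \<Rightarrow> nat) \<Rightarrow> nat \<Rightarrow> nat" where
  "col_height r s 0 = 1"
| "col_height r s (Suc n) = r n * col_height r s n + (\<Sum>k<r n. s n k)"

text \<open>Index (in column \<open>C (n+1)\<close>) of the bottom level of the \<open>k\<close>-th subcolumn of \<open>C n\<close>.\<close>
definition sub_pos :: "(nat \<Rightarrow> nat) \<Rightarrow> (nat \<Rightarrow> nat \<Rightarrow> nat) \<Rightarrow> nat \<Rightarrow> nat \<Rightarrow> nat" where
  "sub_pos r s n k = k * col_height r s n + (\<Sum>i<k. s n i)"

text \<open>\<open>L n j\<close> is the \<open>j\<close>-th level (from the bottom, \<open>j < h n\<close>) of column \<open>C n\<close>;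
  \<open>T\<close> is an invertible measure preserving map realising the cutting and stacking
  construction with cut numbers \<open>r n\<close> and spacer numbers \<open>s n k\<close>.\<close>
definition cutting_stacking ::
  "'a measure \<Rightarrow> ('a \<Rightarrow> 'a) \<Rightarrow> (nat \<Rightarrow> nat) \<Rightarrow> (nat \<Rightarrow> nat \<Rightarrow> nat) \<Rightarrow> (nat \<Rightarrow> nat \<Rightarrow> 'a set) \<Rightarrow> bool" where
  "cutting_stacking M T r s L \<longleftrightarrow>
     (\<forall>n. 2 \<le> r n) \<and>
     0 < emeasure M (L 0 0) \<and> emeasure M (L 0 0) < \<infinity> \<and>
     (\<forall>n j. j < col_height r s n \<longrightarrow> L n j \<in> sets M) \<and>
     (\<forall>n j. j < col_height r s n \<longrightarrow>
        emeasure M (L n j) = emeasure M (L 0 0) / ennreal (real (\<Prod>i<n. r i))) \<and>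
     (\<forall>n i j. i < col_height r s n \<longrightarrow> j < col_height r s n \<longrightarrow> i \<noteq> j \<longrightarrow>
        L n i \<inter> L n j = {}) \<and>
     (\<forall>n j. j < col_height r s n \<longrightarrow>
        L n j = (\<Union>k<r n. L (Suc n) (sub_pos r s n k + j))) \<and>
     (\<forall>n j. Suc j < col_height r s n \<longrightarrow> T ` L n j = L n (Suc j)) \<and>
     bij_betw T (space M) (space M) \<and>
     T \<in> measurable M M \<and> the_inv_into (space M) T \<in> measurable M M \<and>
     (\<forall>A\<in>sets M. emeasure M (T -` A \<inter> space M) = emeasure M A)"

definition finite_union_of_levels ::
  "(nat \<Rightarrow> nat) \<Rightarrow> (nat \<Rightarrow> nat \<Rightarrow> 'a set) \<Rightarrow> 'a set \<Rightarrow> bool" where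
  "finite_union_of_levels ht L A \<longleftrightarrow>
     (\<exists>F :: (nat \<times> nat) set. finite F \<and> (\<forall>p\<in>F. snd p < ht (fst p)) \<and> A = (\<Union>p\<in>F. L (fst p) (snd p)))"

definition u_seq :: "'a measure \<Rightarrow> ('a \<Rightarrow> 'a) \<Rightarrow> 'a set \<Rightarrow> nat \<Rightarrow> real" where
  "u_seq M T F k = measure M (F \<inter> (T ^^ k) ` F) / (measure M F)\<^sup>2"

definition a_seq :: "'a measure \<Rightarrow> ('a \<Rightarrow> 'a) \<Rightarrow> 'a set \<Rightarrow> nat \<Rightarrow> real" where
  "a_seq M T F n = (\<Sum>k<n. u_seq M T F k)"

end

theory Submission
  imports Defs
begin

text \<open>Refine \<open>A\<close>, \<open>B\<close> and \<open>I = L 0 0\<close> to unions of levels of a single column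
  \<open>C\<^sub>m\<close>. Since \<open>T\<close> moves each level of \<open>C\<^sub>m\<close> to the next one, the correlation
  \<open>\<mu>(L\<^sub>a \<inter> T\<^sup>k L\<^sub>b)\<close> of two of its levels is the autocorrelation
  \<open>c j = \<mu>(L\<^sub>0 \<inter> T\<^sup>j L\<^sub>0)\<close> of the bottom level at the shifted time \<open>j = k + b - a\<close>.
  Summed over \<open>k < n\<close>, every pair of levels therefore contributes \<open>S n = (\<Sum>j<n. c j)\<close>
  up to an error bounded by \<open>h\<^sub>m w\<^sub>m\<close> independently of \<open>n\<close>. So
  \<open>\<Sum>k<n. \<mu>(A \<inter> T\<^sup>k B)\<close> and \<open>\<mu>(I)\<^sup>2 a\<^sub>n(I)\<close> are \<open>|A| |B| S n\<close> and
  \<open>|I|\<^sup>2 S n\<close> up to bounded errors, \<open>|\<cdot>|\<close> counting levels of \<open>C\<^sub>m\<close>. As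
  \<open>a\<^sub>n(I) \<rightarrow> \<infinity>\<close>, the quotient tends to \<open>\<mu>(I)\<^sup>2 |A| |B| / |I|\<^sup>2 = \<mu>(A) \<mu>(B)\<close>.\<close>

lemma sum_lessThan_shift:
  fixes g :: "nat \<Rightarrow> 'a::ab_group_add"
  shows "(\<Sum>k<n. g (k + d)) = (\<Sum>k<n + d. g k) - (\<Sum>k<d. g k)"
  by (induction n) (simp_all add: add.commute)

lemma sum_lessThan_diff_bounds:
  fixes g :: "nat \<Rightarrow> real"
  assumes "m \<le> n" and "\<And>k. 0 \<le> g k" and "\<And>k. g k \<le> W"
  shows "0 \<le> (\<Sum>k<n. g k) - (\<Sum>k<m. g k) \<and> (\<Sum>k<n. g k) - (\<Sum>k<m. g k) \<le> real (n - m) * W"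
proof -
  have "(\<Sum>k<n. g k) - (\<Sum>k<m. g k) = (\<Sum>k\<in>{m..<n}. g k)"
    using sum_diff_nat_ivl[of 0 m n g] assms(1) by (simp add: atLeast0LessThan)
  moreover have "(\<Sum>k\<in>{m..<n}. g k) \<le> real (n - m) * W"
    using sum_bounded_above[of "{m..<n}" g W] assms(3) by simp
  ultimately show ?thesis using assms(2) by (simp add: sum_nonneg)
qed

lemma sum_shifted_sequence_close:
  fixes f g :: "nat \<Rightarrow> real"
  assumes shift: "\<And>k. a \<le> k + b \<Longrightarrow> f k = g (k + b - a)"
    and f: "\<And>k. 0 \<le> f k" "\<And>k. f k \<le> W" and g: "\<And>k. 0 \<le> g k" "\<And>k. g k \<le> W"
    and "a \<le> H" and "b \<le> H"
  shows "\<bar>(\<Sum>k<n. f k) - (\<Sum>k<n. g k)\<bar> \<le> real H * W"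
proof -
  have W: "0 \<le> W" using g[of 0] by linarith
  have bounds: "0 \<le> (\<Sum>k<j. u k) - (\<Sum>k<i. u k) \<and> (\<Sum>k<j. u k) - (\<Sum>k<i. u k) \<le> real H * W"
    if "u = f \<or> u = g" "i \<le> j" "j - i \<le> H" for u i j
  proof -
    have "real (j - i) * W \<le> real H * W" using that(3) W by (intro mult_right_mono) auto
    then show ?thesis using sum_lessThan_diff_bounds[of i j u W] that(1,2) f g by auto
  qed
  show ?thesis
  proof (cases "a \<le> b")
    case True
    define d where "d = b - a"
    have "(\<Sum>k<n. f k) = (\<Sum>k<n. g (k + d))"
      using True shift unfolding d_def by (intro sum.cong) auto
    also have "\<dots> = (\<Sum>k<n + d. g k) - (\<Sum>k<d. g k)" by (rule sum_lessThan_shift)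
    finally have "(\<Sum>k<n. f k) - (\<Sum>k<n. g k)
        = ((\<Sum>k<n + d. g k) - (\<Sum>k<n. g k)) - ((\<Sum>k<d. g k) - (\<Sum>k<0. g k))" by simp
    moreover have "d \<le> H" using \<open>b \<le> H\<close> unfolding d_def by simp
    ultimately show ?thesis using bounds[of g n "n + d"] bounds[of g 0 d] by (simp add: abs_le_iff)
  next
    case False
    define d where "d = a - b"
    have "d \<le> H" using \<open>a \<le> H\<close> unfolding d_def by simp
    show ?thesis
    proof (cases "n \<le> d")
      case True
      then show ?thesis using bounds[of f 0 n] bounds[of g 0 n] \<open>d \<le> H\<close> by (simp add: abs_le_iff)
    next
      case False
      define n' where "n' = n - d"
      have n: "n = n' + d" using False unfolding n'_def by simp
      have "(\<Sum>k<n'. g k) = (\<Sum>k<n'. f (k + d))"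
        using \<open>\<not> a \<le> b\<close> shift unfolding d_def by (intro sum.cong) auto
      also have "\<dots> = (\<Sum>k<n. f k) - (\<Sum>k<d. f k)" unfolding n by (rule sum_lessThan_shift)
      finally have "(\<Sum>k<n. f k) - (\<Sum>k<n. g k)
          = ((\<Sum>k<d. f k) - (\<Sum>k<0. f k)) - ((\<Sum>k<n. g k) - (\<Sum>k<n'. g k))" by simp
      then show ?thesis using bounds[of f 0 d] bounds[of g n' n] n \<open>d \<le> H\<close> by (simp add: abs_le_iff)
    qed
  qed
qed

lemma card_square_le_twice_card_ordered_pairs:
  fixes Q :: "'a::linorder set"
  assumes "finite Q"
  shows "card Q ^ 2 \<le> 2 * card {(a, b) \<in> Q \<times> Q. b \<le> a}"
proof -
  let ?P = "{(a, b) \<in> Q \<times> Q. b \<le> a}" and ?P' = "{(a, b) \<in> Q \<times> Q. a \<le> b}"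
  have "card (Q \<times> Q) = card (?P \<union> ?P')" by (rule arg_cong[of _ _ card]) (auto simp: nle_le)
  also have "\<dots> \<le> card ?P + card ?P'" by (rule card_Un_le)
  also have "card ?P' = card ?P"
    by (rule bij_betw_same_card[of prod.swap]) (auto simp: bij_betw_def)
  finally show ?thesis by (simp add: card_cartesian_product power2_eq_square)
qed

lemma ratio_tendsto_of_common_asymptotics:
  fixes X Y S :: "nat \<Rightarrow> real"
  assumes X: "\<And>n. \<bar>X n - \<alpha> * S n\<bar> \<le> C" and Y: "\<And>n. \<bar>Y n - \<beta> * S n\<bar> \<le> D"
    and "0 < \<beta>" and Y_top: "filterlim Y at_top sequentially"
  shows "(\<lambda>n. X n / Y n) \<longlonglongrightarrow> \<alpha> / \<beta>"
proof -
  define E where "E n = X n - \<alpha> / \<beta> * Y n" for n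
  have E: "\<bar>E n\<bar> \<le> C + \<bar>\<alpha> / \<beta>\<bar> * D" for n
  proof -
    have "E n = (X n - \<alpha> * S n) - \<alpha> / \<beta> * (Y n - \<beta> * S n)"
      unfolding E_def using \<open>0 < \<beta>\<close> by (simp add: algebra_simps)
    then have "\<bar>E n\<bar> \<le> \<bar>X n - \<alpha> * S n\<bar> + \<bar>\<alpha> / \<beta>\<bar> * \<bar>Y n - \<beta> * S n\<bar>"
      by (simp only: abs_mult[symmetric] abs_triangle_ineq4)
    also have "\<dots> \<le> C + \<bar>\<alpha> / \<beta>\<bar> * D" by (intro add_mono mult_left_mono X Y abs_ge_zero)
    finally show ?thesis .
  qed
  define K where "K = C + \<bar>\<alpha> / \<beta>\<bar> * D"
  have Y_ge_1: "eventually (\<lambda>n. 1 \<le> Y n) sequentially"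
    using Y_top unfolding filterlim_at_top by blast
  have "(\<lambda>n. K / Y n) \<longlonglongrightarrow> 0"
    by (rule tendsto_divide_0[OF tendsto_const filterlim_at_top_imp_at_infinity[OF Y_top]])
  then have "(\<lambda>n. E n / Y n) \<longlonglongrightarrow> 0"
  proof (rule Lim_null_comparison[rotated])
    show "eventually (\<lambda>n. norm (E n / Y n) \<le> K / Y n) sequentially"
      using Y_ge_1 by eventually_elim (use E in \<open>simp add: K_def abs_divide divide_right_mono\<close>)
  qed
  then have "(\<lambda>n. \<alpha> / \<beta> + E n / Y n) \<longlonglongrightarrow> \<alpha> / \<beta>"
    using tendsto_add[OF tendsto_const[of "\<alpha> / \<beta>"]] by fastforce
  moreover have "eventually (\<lambda>n. \<alpha> / \<beta> + E n / Y n = X n / Y n) sequentially"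
    using Y_ge_1 by eventually_elim (simp add: E_def field_simps)
  ultimately show ?thesis by (rule Lim_transform_eventually)
qed

locale invertible_measure_preserving =
  fixes M :: "'a measure" and T :: "'a \<Rightarrow> 'a"
  assumes bij: "bij_betw T (space M) (space M)"
    and inv_measurable: "the_inv_into (space M) T \<in> M \<rightarrow>\<^sub>M M"
    and emeasure_vimage: "A \<in> sets M \<Longrightarrow> emeasure M (T -` A \<inter> space M) = emeasure M A"
begin

lemma inj_on_T: "inj_on T (space M)" and image_space: "T ` space M = space M"
  using bij by (simp_all add: bij_betw_def)

lemma image_eq_vimage_inv:
  assumes "X \<subseteq> space M"
  shows "T ` X = the_inv_into (space M) T -` X \<inter> space M"
proof (intro set_eqI iffI)
  fix y assume "y \<in> T ` X"
  then show "y \<in> the_inv_into (space M) T -` X \<inter> space M"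
    using the_inv_into_f_f[OF inj_on_T] assms image_space by auto
next
  fix y assume y: "y \<in> the_inv_into (space M) T -` X \<inter> space M"
  then have "y = T (the_inv_into (space M) T y)" using f_the_inv_into_f[OF inj_on_T] image_space by auto
  then show "y \<in> T ` X" using y by blast
qed

lemma image_in_sets: "X \<in> sets M \<Longrightarrow> T ` X \<in> sets M"
  using image_eq_vimage_inv[OF sets.sets_into_space] measurable_sets[OF inv_measurable] by simp

lemma emeasure_image:
  assumes "X \<in> sets M"
  shows "emeasure M (T ` X) = emeasure M X"
proof -
  have "T -` T ` X \<inter> space M = X"
    using inj_on_T sets.sets_into_space[OF assms] by (auto simp: inj_on_def)
  then show ?thesis using emeasure_vimage[OF image_in_sets[OF assms]] by simp
qed

lemma funpow_Suc_image: "(T ^^ Suc k) ` X = T ` (T ^^ k) ` X"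
  by (simp add: image_image)

lemma funpow_image_in_sets: "X \<in> sets M \<Longrightarrow> (T ^^ k) ` X \<in> sets M"
  by (induction k) (simp_all only: funpow_Suc_image funpow.simps(1) image_id id_apply image_in_sets)

lemma measure_funpow_image: "X \<in> sets M \<Longrightarrow> measure M ((T ^^ k) ` X) = measure M X"
  by (induction k) (simp_all add: measure_def funpow_Suc_image emeasure_image funpow_image_in_sets del: funpow.simps)

lemma inj_on_funpow: "inj_on (T ^^ k) (space M)"
  using bij_betw_funpow[OF bij] by (simp add: bij_betw_def)

end

locale cutting_and_stacking =
  fixes M :: "'a measure" and T :: "'a \<Rightarrow> 'a" and r :: "nat \<Rightarrow> nat"
    and s :: "nat \<Rightarrow> nat \<Rightarrow> nat" and L :: "nat \<Rightarrow> nat \<Rightarrow> 'a set"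
  assumes cutting_stacking: "cutting_stacking M T r s L"
begin

abbreviation h :: "nat \<Rightarrow> nat" where "h \<equiv> col_height r s"

lemma cuts_ge_two: "2 \<le> r n"
  and base_emeasure_pos: "0 < emeasure M (L 0 0)"
  and base_emeasure_finite: "emeasure M (L 0 0) < \<infinity>"
  and level_in_sets: "j < h n \<Longrightarrow> L n j \<in> sets M"
  and emeasure_level_eq_base_div: "j < h n \<Longrightarrow> emeasure M (L n j) = emeasure M (L 0 0) / ennreal (real (\<Prod>i<n. r i))"
  and levels_disjoint: "i < h n \<Longrightarrow> j < h n \<Longrightarrow> i \<noteq> j \<Longrightarrow> L n i \<inter> L n j = {}"
  and level_eq_UN_subcolumns: "j < h n \<Longrightarrow> L n j = (\<Union>k<r n. L (Suc n) (sub_pos r s n k + j))"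
  and image_level: "Suc j < h n \<Longrightarrow> T ` L n j = L n (Suc j)"
  and T_bij: "bij_betw T (space M) (space M)"
  and T_inv_measurable: "the_inv_into (space M) T \<in> M \<rightarrow>\<^sub>M M"
  and T_emeasure_vimage: "X \<in> sets M \<Longrightarrow> emeasure M (T -` X \<inter> space M) = emeasure M X"
  using cutting_stacking unfolding cutting_stacking_def by (elim conjE; metis)+

sublocale invertible_measure_preserving M T
  using T_bij T_inv_measurable T_emeasure_vimage by unfold_locales

definition w :: "nat \<Rightarrow> real" where
  "w n = measure M (L 0 0) / real (\<Prod>i<n. r i)"

definition level_correlation :: "nat \<Rightarrow> nat \<Rightarrow> nat \<Rightarrow> nat \<Rightarrow> real" where
  "level_correlation m a b k = measure M (L m a \<inter> (T ^^ k) ` L m b)"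

lemma prod_cuts_pos: "0 < real (\<Prod>i<n. r i)"
  using cuts_ge_two by (simp add: prod_pos order.strict_trans2[OF _ cuts_ge_two])

lemma prod_cuts_ge: "2 ^ n \<le> real (\<Prod>i<n. r i)"
proof (induction n)
  case (Suc n)
  have "(2::real) ^ Suc n = 2 * 2 ^ n" by simp
  also have "\<dots> \<le> real (r n) * real (\<Prod>i<n. r i)" using Suc cuts_ge_two[of n] by (intro mult_mono) auto
  finally show ?case by (simp add: mult.commute)
qed simp

lemma base_measure_pos: "0 < measure M (L 0 0)"
  using base_emeasure_pos base_emeasure_finite by (simp add: measure_def enn2real_positive_iff)

lemma w_pos: "0 < w n"
  unfolding w_def using base_measure_pos prod_cuts_pos by simp

lemma emeasure_level: "j < h n \<Longrightarrow> emeasure M (L n j) = ennreal (w n)"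
proof -
  assume "j < h n"
  have "emeasure M (L 0 0) = ennreal (measure M (L 0 0))"
    using base_emeasure_finite by (simp add: emeasure_eq_ennreal_measure)
  then show ?thesis
    using emeasure_level_eq_base_div[OF \<open>j < h n\<close>] base_measure_pos prod_cuts_pos unfolding w_def
    by (simp add: divide_ennreal)
qed

lemma level_subset_space: "j < h n \<Longrightarrow> L n j \<subseteq> space M"
  using level_in_sets sets.sets_into_space by blast

lemma level_fmeasurable: "j < h n \<Longrightarrow> L n j \<in> fmeasurable M"
  using level_in_sets emeasure_level by (intro fmeasurableI) auto

lemma measure_level: "j < h n \<Longrightarrow> measure M (L n j) = w n"
  using emeasure_level w_pos[of n] by (simp add: measure_def)

lemma col_height_pos: "0 < h n"
  using cuts_ge_two by (induction n) (auto simp: order.strict_trans2[OF _ cuts_ge_two])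

lemma funpow_image_level: "i + j < h n \<Longrightarrow> (T ^^ j) ` L n i = L n (i + j)"
proof (induction j)
  case (Suc j)
  then show ?case using image_level[of "i + j" n] by (simp only: funpow_Suc_image) simp
qed simp

lemma sub_pos_bound: "k < r n \<Longrightarrow> q < h n \<Longrightarrow> sub_pos r s n k + q < h (Suc n)"
proof -
  assume k: "k < r n" and q: "q < h n"
  have "Suc k * h n \<le> r n * h n" using k by (intro mult_le_mono1) simp
  moreover have "(\<Sum>i<k. s n i) \<le> (\<Sum>i<r n. s n i)" using k by (intro sum_mono2) auto
  ultimately show ?thesis using q unfolding sub_pos_def by simp
qed

lemma level_eq_UN_finer_levels: "j \<le> m \<Longrightarrow> i < h j \<Longrightarrow> \<exists>Q \<subseteq> {..<h m}. L j i = (\<Union>q\<in>Q. L m q)"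
proof (induction m rule: dec_induct)
  case base
  then show ?case by (intro exI[of _ "{i}"]) auto
next
  case (step m)
  then obtain Q where Q: "Q \<subseteq> {..<h m}" "L j i = (\<Union>q\<in>Q. L m q)" by blast
  define Q' where "Q' = (\<lambda>(k, q). sub_pos r s m k + q) ` ({..<r m} \<times> Q)"
  have "Q' \<subseteq> {..<h (Suc m)}" using Q(1) sub_pos_bound unfolding Q'_def by auto
  moreover have "L j i = (\<Union>q\<in>Q'. L (Suc m) q)"
  proof -
    have "L j i = (\<Union>q\<in>Q. \<Union>k<r m. L (Suc m) (sub_pos r s m k + q))"
      unfolding Q(2) using Q(1) by (intro SUP_cong refl level_eq_UN_subcolumns) auto
    also have "\<dots> = (\<Union>q\<in>Q'. L (Suc m) q)" unfolding Q'_def by auto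
    finally show ?thesis .
  qed
  ultimately show ?case by blast
qed

lemma eventually_UN_levels:
  assumes "finite_union_of_levels h L A"
  shows "\<forall>\<^sub>F m in sequentially. \<exists>Q \<subseteq> {..<h m}. A = (\<Union>q\<in>Q. L m q)"
proof -
  obtain F where F: "finite F" "\<forall>p\<in>F. snd p < h (fst p)" "A = (\<Union>p\<in>F. L (fst p) (snd p))"
    using assms unfolding finite_union_of_levels_def by blast
  have "\<forall>\<^sub>F m in sequentially. \<forall>p\<in>F. \<exists>Q \<subseteq> {..<h m}. L (fst p) (snd p) = (\<Union>q\<in>Q. L m q)"
  proof (intro eventually_ball_finite[OF F(1)] ballI)
    fix p assume "p \<in> F"
    then have "\<forall>m\<ge>fst p. \<exists>Q \<subseteq> {..<h m}. L (fst p) (snd p) = (\<Union>q\<in>Q. L m q)"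
      using F(2) level_eq_UN_finer_levels by blast
    then show "\<forall>\<^sub>F m in sequentially. \<exists>Q \<subseteq> {..<h m}. L (fst p) (snd p) = (\<Union>q\<in>Q. L m q)"
      unfolding eventually_sequentially by blast
  qed
  then show ?thesis
  proof (rule eventually_mono)
    fix m assume "\<forall>p\<in>F. \<exists>Q \<subseteq> {..<h m}. L (fst p) (snd p) = (\<Union>q\<in>Q. L m q)"
    then obtain Q where "\<forall>p\<in>F. Q p \<subseteq> {..<h m} \<and> L (fst p) (snd p) = (\<Union>q\<in>Q p. L m q)"
      by metis
    then show "\<exists>Q \<subseteq> {..<h m}. A = (\<Union>q\<in>Q. L m q)"
      using F(3) by (intro exI[of _ "\<Union>(Q ` F)"]) auto
  qed
qed

lemma measure_UN_levels:
  assumes "Q \<subseteq> {..<h m}"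
  shows "measure M (\<Union>q\<in>Q. L m q) = real (card Q) * w m"
proof -
  have "measure M (\<Union>q\<in>Q. L m q) = (\<Sum>q\<in>Q. measure M (L m q))"
  proof (rule measure_UNION')
    show "pairwise (\<lambda>i j. disjnt (L m i) (L m j)) Q"
      unfolding pairwise_def disjnt_def using assms by (intro ballI impI levels_disjoint) auto
  qed (use assms finite_subset level_fmeasurable in auto)
  also have "\<dots> = (\<Sum>q\<in>Q. w m)" using assms measure_level by (intro sum.cong) auto
  finally show ?thesis by simp
qed

lemma measure_Int_level_le:
  assumes "a < h m" "X \<in> sets M"
  shows "measure M (L m a \<inter> X) \<le> w m"
proof -
  have "measure M (L m a \<inter> X) \<le> measure M (L m a)"
    using assms level_fmeasurable level_in_sets by (intro measure_mono_fmeasurable) auto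
  then show ?thesis using measure_level[OF assms(1)] by simp
qed

lemma level_correlation_nonneg: "0 \<le> level_correlation m a b k"
  unfolding level_correlation_def by (rule measure_nonneg)

lemma level_correlation_le: "a < h m \<Longrightarrow> b < h m \<Longrightarrow> level_correlation m a b k \<le> w m"
  unfolding level_correlation_def by (blast intro: measure_Int_level_le funpow_image_in_sets level_in_sets)

text \<open>\<open>L m a\<close> and \<open>T\<^sup>k (L m b)\<close> are the images under the injective, measure preserving
  \<open>T\<^sup>a\<close> of \<open>L m 0\<close> and \<open>T\<^sup>j (L m 0)\<close>, \<open>j = k + b - a\<close>.\<close>
lemma level_correlation_shift:
  assumes "a < h m" "b < h m" "a \<le> k + b"
  shows "level_correlation m a b k = level_correlation m 0 0 (k + b - a)"
proof -
  have bottom: "L m 0 \<in> sets M" using level_in_sets col_height_pos by blast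
  have "(T ^^ k) ` L m b = (T ^^ k) ` (T ^^ b) ` L m 0" using funpow_image_level[of 0 b m] assms by simp
  also have "\<dots> = (T ^^ a) ` (T ^^ (k + b - a)) ` L m 0"
    using assms by (simp add: image_comp funpow_add[symmetric])
  finally have "L m a \<inter> (T ^^ k) ` L m b = (T ^^ a) ` L m 0 \<inter> (T ^^ a) ` (T ^^ (k + b - a)) ` L m 0"
    using funpow_image_level[of 0 a m] assms by simp
  also have "\<dots> = (T ^^ a) ` (L m 0 \<inter> (T ^^ (k + b - a)) ` L m 0)"
    using sets.sets_into_space[OF bottom] sets.sets_into_space[OF funpow_image_in_sets[OF bottom]]
    by (rule inj_on_image_Int[OF inj_on_funpow, symmetric])
  finally show ?thesis
    unfolding level_correlation_def using bottom
    by (simp add: measure_funpow_image funpow_image_in_sets sets.Int)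
qed

lemma level_correlation_sum_close:
  assumes "a < h m" "b < h m"
  shows "\<bar>(\<Sum>k<n. level_correlation m a b k) - (\<Sum>k<n. level_correlation m 0 0 k)\<bar> \<le> real (h m) * w m"
proof (rule sum_shifted_sequence_close[where a = a and b = b])
  show "level_correlation m a b k = level_correlation m 0 0 (k + b - a)" if "a \<le> k + b" for k
    using assms that by (rule level_correlation_shift)
qed (use assms level_correlation_nonneg level_correlation_le col_height_pos in auto)

lemma measure_UN_levels_Int_funpow:
  assumes "Q1 \<subseteq> {..<h m}" "Q2 \<subseteq> {..<h m}"
  shows "measure M ((\<Union>a\<in>Q1. L m a) \<inter> (T ^^ k) ` (\<Union>b\<in>Q2. L m b))
    = (\<Sum>a\<in>Q1. \<Sum>b\<in>Q2. level_correlation m a b k)"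
proof -
  define F where "F p = L m (fst p) \<inter> (T ^^ k) ` L m (snd p)" for p
  have disjoint: "F p \<inter> F p' = {}" if pairs: "p \<in> Q1 \<times> Q2" "p' \<in> Q1 \<times> Q2" "p \<noteq> p'" for p p'
  proof -
    consider "fst p \<noteq> fst p'" | "snd p \<noteq> snd p'" using pairs(3) prod_eq_iff by blast
    then show ?thesis
    proof cases
      case 1
      then have "L m (fst p) \<inter> L m (fst p') = {}" using pairs assms by (intro levels_disjoint) auto
      then show ?thesis unfolding F_def by blast
    next
      case 2
      then have "L m (snd p) \<inter> L m (snd p') = {}" using pairs assms by (intro levels_disjoint) auto
      moreover have "(T ^^ k) ` L m (snd p) \<inter> (T ^^ k) ` L m (snd p') = (T ^^ k) ` (L m (snd p) \<inter> L m (snd p'))"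
        using pairs assms by (intro inj_on_image_Int[OF inj_on_funpow, symmetric] level_subset_space) auto
      ultimately show ?thesis unfolding F_def by blast
    qed
  qed
  have "(\<Union>a\<in>Q1. L m a) \<inter> (T ^^ k) ` (\<Union>b\<in>Q2. L m b) = (\<Union>p\<in>Q1 \<times> Q2. F p)"
    unfolding F_def image_UN by auto
  also have "measure M \<dots> = (\<Sum>p\<in>Q1 \<times> Q2. measure M (F p))"
  proof (rule measure_UNION')
    show "pairwise (\<lambda>p p'. disjnt (F p) (F p')) (Q1 \<times> Q2)"
      unfolding pairwise_def disjnt_def using disjoint by blast
    show "F p \<in> fmeasurable M" if "p \<in> Q1 \<times> Q2" for p
      unfolding F_def using that assms level_fmeasurable funpow_image_in_sets level_in_sets
      by (intro fmeasurable_Int_fmeasurable) auto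
  qed (use finite_subset[OF assms(1)] finite_subset[OF assms(2)] in auto)
  finally show ?thesis by (simp add: sum.cartesian_product F_def level_correlation_def case_prod_beta)
qed

lemma UN_levels_correlation_sum_close:
  assumes "Q1 \<subseteq> {..<h m}" "Q2 \<subseteq> {..<h m}"
  shows "\<bar>(\<Sum>k<n. measure M ((\<Union>a\<in>Q1. L m a) \<inter> (T ^^ k) ` (\<Union>b\<in>Q2. L m b)))
           - real (card Q1 * card Q2) * (\<Sum>k<n. level_correlation m 0 0 k)\<bar>
         \<le> real (card Q1 * card Q2) * (real (h m) * w m)"
proof -
  let ?S = "\<Sum>k<n. level_correlation m 0 0 k"
  have "(\<Sum>k<n. measure M ((\<Union>a\<in>Q1. L m a) \<inter> (T ^^ k) ` (\<Union>b\<in>Q2. L m b)))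
      = (\<Sum>k<n. \<Sum>a\<in>Q1. \<Sum>b\<in>Q2. level_correlation m a b k)"
    using measure_UN_levels_Int_funpow[OF assms] by simp
  also have "\<dots> = (\<Sum>a\<in>Q1. \<Sum>k<n. \<Sum>b\<in>Q2. level_correlation m a b k)" by (rule sum.swap)
  also have "\<dots> = (\<Sum>a\<in>Q1. \<Sum>b\<in>Q2. \<Sum>k<n. level_correlation m a b k)" by (intro sum.cong refl sum.swap)
  finally have diff: "(\<Sum>k<n. measure M ((\<Union>a\<in>Q1. L m a) \<inter> (T ^^ k) ` (\<Union>b\<in>Q2. L m b)))
      - real (card Q1 * card Q2) * ?S = (\<Sum>a\<in>Q1. \<Sum>b\<in>Q2. (\<Sum>k<n. level_correlation m a b k) - ?S)"
    by (simp add: sum_subtractf sum_distrib_right)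
  have "\<bar>\<Sum>a\<in>Q1. \<Sum>b\<in>Q2. (\<Sum>k<n. level_correlation m a b k) - ?S\<bar>
      \<le> (\<Sum>a\<in>Q1. \<Sum>b\<in>Q2. \<bar>(\<Sum>k<n. level_correlation m a b k) - ?S\<bar>)"
    by (rule order_trans[OF sum_abs sum_mono[OF sum_abs]])
  also have "\<dots> \<le> (\<Sum>a\<in>Q1. \<Sum>b\<in>Q2. real (h m) * w m)"
    using assms by (intro sum_mono level_correlation_sum_close) auto
  finally show ?thesis unfolding diff by simp
qed

text \<open>Among the levels of \<open>C\<^sub>m\<close> making up \<open>L 0 0\<close>, every pair \<open>b \<le> a\<close> contributes a full
  level \<open>w m\<close> at time \<open>a - b\<close>, and there are at least \<open>(\<Prod>i<m. r i)\<^sup>2 / 2\<close> such pairs.\<close>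
lemma return_sum_lower_bound:
  "measure M (L 0 0) * 2 ^ m / 2 \<le> (\<Sum>k<h m. measure M (L 0 0 \<inter> (T ^^ k) ` L 0 0))"
proof -
  obtain Q where Q: "Q \<subseteq> {..<h m}" "L 0 0 = (\<Union>q\<in>Q. L m q)"
    using level_eq_UN_finer_levels[of 0 m 0] by auto
  let ?P = "{(a, b) \<in> Q \<times> Q. b \<le> a}"
  let ?c = "\<lambda>(a, b). \<Sum>k<h m. level_correlation m a b k"
  have card_Q: "real (card Q) * w m = measure M (L 0 0)"
    using measure_UN_levels[OF Q(1)] Q(2) by simp
  then have "real (card Q) * measure M (L 0 0) = real (\<Prod>i<m. r i) * measure M (L 0 0)"
    using prod_cuts_pos[of m] unfolding w_def by (simp add: divide_eq_eq mult.commute del: of_nat_prod)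
  then have "real (card Q) = real (\<Prod>i<m. r i)" using base_measure_pos by simp
  then have "measure M (L 0 0) * 2 ^ m / 2 \<le> real (card Q) * measure M (L 0 0) / 2"
    using prod_cuts_ge base_measure_pos by simp
  also have "\<dots> = real (card Q ^ 2) / 2 * w m"
    unfolding card_Q[symmetric] by (simp add: power2_eq_square)
  also have "\<dots> \<le> real (card ?P) * w m"
  proof -
    have "real (card Q ^ 2) \<le> real (2 * card ?P)"
      using card_square_le_twice_card_ordered_pairs[OF finite_subset[OF Q(1) finite_lessThan]]
      by (simp only: of_nat_le_iff)
    then show ?thesis using w_pos[of m] by (intro mult_right_mono) auto
  qed
  also have "\<dots> = (\<Sum>p\<in>?P. w m)" by simp
  also have "\<dots> \<le> (\<Sum>p\<in>?P. ?c p)"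
  proof (rule sum_mono)
    fix p assume "p \<in> ?P"
    then obtain a b where p: "p = (a, b)" "a \<in> Q" "b \<in> Q" "b \<le> a" by blast
    then have ab: "a < h m" "b < h m" using Q(1) by auto
    have "w m = level_correlation m a b (a - b)"
      using level_correlation_shift[OF ab] p(4) col_height_pos[of m]
      by (simp add: level_correlation_def measure_level)
    also have "\<dots> \<le> (\<Sum>k<h m. level_correlation m a b k)"
      using ab level_correlation_nonneg by (intro member_le_sum) auto
    finally show "w m \<le> ?c p" unfolding p(1) by simp
  qed
  also have "\<dots> \<le> (\<Sum>p\<in>Q \<times> Q. ?c p)"
    using finite_subset[OF Q(1)] level_correlation_nonneg by (intro sum_mono2) (auto intro!: sum_nonneg)
  also have "\<dots> = (\<Sum>a\<in>Q. \<Sum>b\<in>Q. \<Sum>k<h m. level_correlation m a b k)"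
    by (rule sum.cartesian_product[symmetric])
  also have "\<dots> = (\<Sum>a\<in>Q. \<Sum>k<h m. \<Sum>b\<in>Q. level_correlation m a b k)"
    by (intro sum.cong refl sum.swap)
  also have "\<dots> = (\<Sum>k<h m. \<Sum>a\<in>Q. \<Sum>b\<in>Q. level_correlation m a b k)"
    by (rule sum.swap)
  also have "\<dots> = (\<Sum>k<h m. measure M (L 0 0 \<inter> (T ^^ k) ` L 0 0))"
    using measure_UN_levels_Int_funpow[OF Q(1) Q(1)] Q(2) by simp
  finally show ?thesis .
qed

lemma return_sum_tendsto_infinity:
  "filterlim (\<lambda>n. \<Sum>k<n. measure M (L 0 0 \<inter> (T ^^ k) ` L 0 0)) at_top sequentially"
proof (subst filterlim_at_top, intro allI)
  fix Z :: real
  obtain m where "Z * 2 / measure M (L 0 0) < 2 ^ m" using real_arch_pow[of 2] by auto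
  then have Z: "Z \<le> measure M (L 0 0) * 2 ^ m / 2" using base_measure_pos by (simp add: field_simps)
  have "Z \<le> (\<Sum>k<n. measure M (L 0 0 \<inter> (T ^^ k) ` L 0 0))" if "h m \<le> n" for n
  proof -
    have "(\<Sum>k<h m. measure M (L 0 0 \<inter> (T ^^ k) ` L 0 0)) \<le> (\<Sum>k<n. measure M (L 0 0 \<inter> (T ^^ k) ` L 0 0))"
      using that by (intro sum_mono2) auto
    then show ?thesis using Z return_sum_lower_bound[of m] by linarith
  qed
  then show "\<forall>\<^sub>F n in sequentially. Z \<le> (\<Sum>k<n. measure M (L 0 0 \<inter> (T ^^ k) ` L 0 0))"
    unfolding eventually_sequentially by blast
qed

lemma correlation_ratio_tendsto:
  assumes "finite_union_of_levels h L A" "finite_union_of_levels h L B"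
  shows "(\<lambda>n. (\<Sum>k<n. measure M (A \<inter> (T ^^ k) ` B)) / (\<Sum>k<n. measure M (L 0 0 \<inter> (T ^^ k) ` L 0 0)))
    \<longlonglongrightarrow> measure M A * measure M B / measure M (L 0 0) ^ 2"
proof -
  have "finite_union_of_levels h L (L 0 0)"
    unfolding finite_union_of_levels_def by (intro exI[of _ "{(0, 0)}"]) auto
  then have "\<forall>\<^sub>F m in sequentially. (\<exists>QA \<subseteq> {..<h m}. A = (\<Union>q\<in>QA. L m q)) \<and>
      (\<exists>QB \<subseteq> {..<h m}. B = (\<Union>q\<in>QB. L m q)) \<and> (\<exists>QI \<subseteq> {..<h m}. L 0 0 = (\<Union>q\<in>QI. L m q))"
    using assms by (intro eventually_conj eventually_UN_levels)
  then have "\<exists>m. (\<exists>QA \<subseteq> {..<h m}. A = (\<Union>q\<in>QA. L m q)) \<and>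
      (\<exists>QB \<subseteq> {..<h m}. B = (\<Union>q\<in>QB. L m q)) \<and> (\<exists>QI \<subseteq> {..<h m}. L 0 0 = (\<Union>q\<in>QI. L m q))"
    by (rule eventually_happens'[OF sequentially_bot])
  then obtain m QA QB QI where QA: "QA \<subseteq> {..<h m}" "A = (\<Union>q\<in>QA. L m q)"
    and QB: "QB \<subseteq> {..<h m}" "B = (\<Union>q\<in>QB. L m q)" and QI: "QI \<subseteq> {..<h m}" "L 0 0 = (\<Union>q\<in>QI. L m q)"
    by blast
  let ?S = "\<lambda>n. \<Sum>k<n. level_correlation m 0 0 k"
  have "card QI \<noteq> 0"
    using measure_UN_levels[OF QI(1)] QI(2) base_measure_pos by (auto simp: zero_less_mult_iff)
  then have "0 < real (card QI * card QI)" by simp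
  moreover have "\<bar>(\<Sum>k<n. measure M (A \<inter> (T ^^ k) ` B)) - real (card QA * card QB) * ?S n\<bar>
      \<le> real (card QA * card QB) * (real (h m) * w m)" for n
    unfolding QA(2) QB(2) by (rule UN_levels_correlation_sum_close[OF QA(1) QB(1)])
  moreover have "\<bar>(\<Sum>k<n. measure M (L 0 0 \<inter> (T ^^ k) ` L 0 0)) - real (card QI * card QI) * ?S n\<bar>
      \<le> real (card QI * card QI) * (real (h m) * w m)" for n
    unfolding QI(2) by (rule UN_levels_correlation_sum_close[OF QI(1) QI(1)])
  ultimately have "(\<lambda>n. (\<Sum>k<n. measure M (A \<inter> (T ^^ k) ` B)) / (\<Sum>k<n. measure M (L 0 0 \<inter> (T ^^ k) ` L 0 0)))
      \<longlonglongrightarrow> real (card QA * card QB) / real (card QI * card QI)"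
    using return_sum_tendsto_infinity by (intro ratio_tendsto_of_common_asymptotics)
  also have "real (card QA * card QB) / real (card QI * card QI)
      = measure M A * measure M B / measure M (L 0 0) ^ 2"
    using \<open>card QI \<noteq> 0\<close> w_pos[of m] unfolding QA(2) QB(2) measure_UN_levels[OF QA(1)] measure_UN_levels[OF QB(1)]
      QI(2) measure_UN_levels[OF QI(1)]
    by (simp add: field_simps power2_eq_square)
  finally show ?thesis .
qed

end

theorem mainTheorem2:
  fixes M :: "'a measure" and T :: "'a \<Rightarrow> 'a"
    and r :: "nat \<Rightarrow> nat" and s :: "nat \<Rightarrow> nat \<Rightarrow> nat" and L :: "nat \<Rightarrow> nat \<Rightarrow> 'a set"
    and A B :: "'a set"
  assumes "standard_borel M" and "sigma_finite_measure M" and "nonatomic_measure M"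
    and "cutting_stacking M T r s L"
    and "finite_union_of_levels (col_height r s) L A" and "A \<subseteq> L 0 0"
    and "finite_union_of_levels (col_height r s) L B" and "B \<subseteq> L 0 0"
  shows "(\<lambda>n. (\<Sum>k<n. measure M (A \<inter> (T ^^ k) ` B)) / a_seq M T (L 0 0) n)
           \<longlonglongrightarrow> measure M A * measure M B"
proof -
  interpret cutting_and_stacking M T r s L using assms(4) by unfold_locales
  let ?\<mu>I = "measure M (L 0 0)"
  have "(\<lambda>n. ?\<mu>I ^ 2 * ((\<Sum>k<n. measure M (A \<inter> (T ^^ k) ` B))
      / (\<Sum>k<n. measure M (L 0 0 \<inter> (T ^^ k) ` L 0 0))))
      \<longlonglongrightarrow> ?\<mu>I ^ 2 * (measure M A * measure M B / ?\<mu>I ^ 2)"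
    using correlation_ratio_tendsto[OF assms(5,7)] by (rule tendsto_mult_left)
  moreover have "(\<lambda>n. (\<Sum>k<n. measure M (A \<inter> (T ^^ k) ` B)) / a_seq M T (L 0 0) n)
      = (\<lambda>n. ?\<mu>I ^ 2 * ((\<Sum>k<n. measure M (A \<inter> (T ^^ k) ` B))
      / (\<Sum>k<n. measure M (L 0 0 \<inter> (T ^^ k) ` L 0 0))))"
    unfolding a_seq_def u_seq_def
    by (simp add: sum_divide_distrib[symmetric] divide_divide_eq_right mult.commute)
  ultimately show ?thesis using base_measure_pos by simp
qed

end
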